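(* A numerical semigroup $S$ with multiplicity $e$ and blowup $B$ is additive if and only if ${\rm adj}(S)=\operatorname{Ap}(B;e)$.
   Context: $S$ is a numerical semigroup (a submonoid of $\mathbb N$ with finite complement) with minimal generators $e<a_1<\dots<a_t$. ${\rm ord}(n;S)$ is the maximum of $\sum c_i$ over $(c_0,\dots,c_t)\in\mathbb N^{t+1}$ with $c_0e+\sum c_ia_i=n$. $S$ is additive if ${\rm ord}(u+e;S)={\rm ord}(u;S)+1$ for all $u\in S$. ${\rm adj}(S)=\{s-{\rm ord}(s;S)e:s\in S\}$. The blowup is $B=\langle e,a_1-e,\dots,a_t-e\rangle$, and $\operatorname{Ap}(B;e)=\{w\in B:w-e\notin B\}$. *)

theory Defs
  imports Main
begin

definition numerical_semigroup :: "nat set \<Rightarrow> bool" where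
  "numerical_semigroup S \<longleftrightarrow> 0 \<in> S \<and> (\<forall>x\<in>S. \<forall>y\<in>S. x + y \<in> S) \<and> finite (UNIV - S)"

definition min_gens :: "nat set \<Rightarrow> nat set" where
  "min_gens S = {a \<in> S. a \<noteq> 0 \<and> \<not> (\<exists>x\<in>S. \<exists>y\<in>S. x \<noteq> 0 \<and> y \<noteq> 0 \<and> a = x + y)}"

text \<open>Multiplicity e: the smallest minimal generator (= smallest nonzero element).\<close>
definition multiplicity :: "nat set \<Rightarrow> nat" where
  "multiplicity S = Min (min_gens S)"

definition ord :: "nat \<Rightarrow> nat set \<Rightarrow> nat" where
  "ord n S = Max {(\<Sum>g\<in>min_gens S. c g) | c :: nat \<Rightarrow> nat.
                    (\<Sum>g\<in>min_gens S. c g * g) = n}"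

definition additive :: "nat set \<Rightarrow> bool" where
  "additive S \<longleftrightarrow> (\<forall>u\<in>S. ord (u + multiplicity S) S = ord u S + 1)"

definition adj :: "nat set \<Rightarrow> nat set" where
  "adj S = {s - ord s S * multiplicity S | s. s \<in> S}"

inductive_set monoid_gen :: "nat set \<Rightarrow> nat set" for A :: "nat set" where
  zero: "0 \<in> monoid_gen A"
| step: "x \<in> monoid_gen A \<Longrightarrow> a \<in> A \<Longrightarrow> x + a \<in> monoid_gen A"

definition blowup :: "nat set \<Rightarrow> nat set" where
  "blowup S = monoid_gen ({multiplicity S} \<union> (\<lambda>a. a - multiplicity S) ` (min_gens S - {multiplicity S}))"

text \<open>Apery set Ap(B;e) = {w in B : w - e not in B} (w - e taken in the integers).\<close>
definition apery :: "nat set \<Rightarrow> nat \<Rightarrow> nat set" where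
  "apery B e = {w \<in> B. \<not> (e \<le> w \<and> w - e \<in> B)}"

end

theory Submission
  imports Defs
begin

text \<open>Writing s = \<Sum> c_i a_i with \<Sum> c_i = ord(s;S) gives
  s - m e = \<Sum> c_i (a_i - e) + (ord(s;S) - m) e, so the blowup B consists exactly of the
  numbers s - m e with s \<in> S and m \<le> ord(s;S). Hence adj(S) \<subseteq> B, and every w \<in> Ap(B;e)
  lies in adj(S), since otherwise m < ord(s;S) would put w - e in B. So the theorem says that
  s - (ord(s;S) + 1) e \<notin> B for all s \<in> S. If S is additive and s - (ord(s;S) + 1) e = y - m e
  with m \<le> ord(y;S), then s + m e = y + (ord(s;S) + 1) e, and comparing orders of both sides
  yields m = ord(y;S) + 1, a contradiction. Conversely, if ord(u + e;S) \<ge> ord(u;S) + 2, then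
  (u - ord(u;S) e) - e = (u + e) - (ord(u;S) + 2) e lies in B.\<close>

lemma monoid_gen_add:
  assumes "x \<in> monoid_gen A" and "y \<in> monoid_gen A"
  shows "x + y \<in> monoid_gen A"
  using assms(2)
proof (induction y rule: monoid_gen.induct)
  case (step y a)
  then show ?case
    using monoid_gen.step[of "x + y" A a] by (simp add: add.assoc)
qed (use assms(1) in simp)

lemma monoid_gen_mult: "x \<in> monoid_gen A \<Longrightarrow> k * x \<in> monoid_gen A"
  by (induction k) (auto intro: monoid_gen.zero monoid_gen_add)

lemma monoid_gen_sum:
  "finite I \<Longrightarrow> (\<And>i. i \<in> I \<Longrightarrow> f i \<in> monoid_gen A) \<Longrightarrow> sum f I \<in> monoid_gen A"
  by (induction I rule: finite_induct) (auto intro: monoid_gen.zero monoid_gen_add)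

lemma generator_in_monoid_gen: "a \<in> A \<Longrightarrow> a \<in> monoid_gen A"
  using monoid_gen.step[OF monoid_gen.zero] by fastforce

definition factorization_lengths :: "nat set \<Rightarrow> nat \<Rightarrow> nat set" where
  "factorization_lengths S n =
     {(\<Sum>g\<in>min_gens S. c g) | c :: nat \<Rightarrow> nat. (\<Sum>g\<in>min_gens S. c g * g) = n}"

lemma ord_eq_Max_factorization_lengths: "ord n S = Max (factorization_lengths S n)"
  unfolding ord_def factorization_lengths_def ..

locale num_semigroup =
  fixes S :: "nat set"
  assumes numerical_semigroup: "numerical_semigroup S"
begin

abbreviation e :: nat where "e \<equiv> multiplicity S"

lemma zero_in: "0 \<in> S"
  and add_in: "x \<in> S \<Longrightarrow> y \<in> S \<Longrightarrow> x + y \<in> S"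
  and finite_gaps: "finite (UNIV - S)"
  using numerical_semigroup unfolding numerical_semigroup_def by blast+

lemma min_gens_subset: "g \<in> min_gens S \<Longrightarrow> g \<in> S"
  and min_gens_nonzero: "g \<in> min_gens S \<Longrightarrow> g \<noteq> 0"
  unfolding min_gens_def by auto

lemma ex_nonzero: "\<exists>x\<in>S. x \<noteq> 0"
proof (rule ccontr)
  assume "\<not> ?thesis"
  then have "UNIV - {0::nat} \<subseteq> UNIV - S" by auto
  moreover have "infinite (UNIV - {0::nat})" by simp
  ultimately show False using finite_gaps finite_subset by blast
qed

lemma least_nonzero_in: "(LEAST x. x \<in> S \<and> x \<noteq> 0) \<in> S"
  and least_nonzero_nonzero: "(LEAST x. x \<in> S \<and> x \<noteq> 0) \<noteq> 0"
  using LeastI_ex[of "\<lambda>x. x \<in> S \<and> x \<noteq> 0"] ex_nonzero by auto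

lemma least_nonzero_le: "x \<in> S \<Longrightarrow> x \<noteq> 0 \<Longrightarrow> (LEAST x. x \<in> S \<and> x \<noteq> 0) \<le> x"
  by (rule Least_le) simp

lemma least_nonzero_le_min_gens: "g \<in> min_gens S \<Longrightarrow> (LEAST x. x \<in> S \<and> x \<noteq> 0) \<le> g"
  by (rule least_nonzero_le[OF min_gens_subset min_gens_nonzero])

lemma least_nonzero_in_min_gens: "(LEAST x. x \<in> S \<and> x \<noteq> 0) \<in> min_gens S"
  unfolding min_gens_def using least_nonzero_in least_nonzero_nonzero
  by (auto dest: least_nonzero_le)

lemma finite_min_gens: "finite (min_gens S)"
proof -
  define m where "m = (LEAST x. x \<in> S \<and> x \<noteq> 0)"
  \<comment> \<open>a minimal generator g \<noteq> m has g - m \<notin> S\<close>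
  have "min_gens S \<subseteq> insert m ((\<lambda>x. x + m) ` (UNIV - S))"
  proof
    fix g assume g: "g \<in> min_gens S"
    show "g \<in> insert m ((\<lambda>x. x + m) ` (UNIV - S))"
    proof (cases "g = m")
      case False
      with least_nonzero_le_min_gens[OF g] have "m < g" unfolding m_def by simp
      moreover have "g - m \<notin> S"
      proof
        assume "g - m \<in> S"
        moreover have "g - m \<noteq> 0" "g = (g - m) + m" using \<open>m < g\<close> by auto
        ultimately show False
          using g least_nonzero_in least_nonzero_nonzero unfolding min_gens_def m_def by blast
      qed
      ultimately show ?thesis by force
    qed simp
  qed
  then show ?thesis
    using finite_gaps finite_subset by blast
qed

lemma multiplicity_eq_Least: "e = (LEAST x. x \<in> S \<and> x \<noteq> 0)"
  unfolding multiplicity_def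
  using finite_min_gens least_nonzero_in_min_gens least_nonzero_le_min_gens
  by (intro Min_eqI) auto

lemma multiplicity_in_min_gens: "e \<in> min_gens S"
  and multiplicity_in: "e \<in> S"
  and multiplicity_le_min_gens: "g \<in> min_gens S \<Longrightarrow> e \<le> g"
  unfolding multiplicity_eq_Least
  by (fact least_nonzero_in_min_gens least_nonzero_in least_nonzero_le_min_gens)+

lemma mult_multiplicity_in: "k * e \<in> S"
  by (induction k) (auto simp: zero_in add_in multiplicity_in)

lemma finite_factorization_lengths: "finite (factorization_lengths S n)"
proof -
  have "factorization_lengths S n \<subseteq> {..n}"
  proof
    fix r assume "r \<in> factorization_lengths S n"
    then obtain c where "r = (\<Sum>g\<in>min_gens S. c g)" "(\<Sum>g\<in>min_gens S. c g * g) = n"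
      unfolding factorization_lengths_def by auto
    moreover have "(\<Sum>g\<in>min_gens S. c g) \<le> (\<Sum>g\<in>min_gens S. c g * g)"
      by (rule sum_mono) (auto dest: min_gens_nonzero)
    ultimately show "r \<in> {..n}" by simp
  qed
  then show ?thesis using finite_subset by blast
qed

lemma factorization_length_mult_le: "r \<in> factorization_lengths S n \<Longrightarrow> r * e \<le> n"
proof -
  assume "r \<in> factorization_lengths S n"
  then obtain c where r: "r = (\<Sum>g\<in>min_gens S. c g)" and n: "(\<Sum>g\<in>min_gens S. c g * g) = n"
    unfolding factorization_lengths_def by auto
  have "r * e = (\<Sum>g\<in>min_gens S. c g * e)" using r by (simp add: sum_distrib_right)
  also have "\<dots> \<le> (\<Sum>g\<in>min_gens S. c g * g)"
    by (rule sum_mono) (simp add: multiplicity_le_min_gens)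
  finally show ?thesis using n by simp
qed

lemma factorization_lengths_add:
  assumes "r1 \<in> factorization_lengths S u" and "r2 \<in> factorization_lengths S v"
  shows "r1 + r2 \<in> factorization_lengths S (u + v)"
proof -
  obtain c1 c2 where
    "r1 = (\<Sum>g\<in>min_gens S. c1 g)" "(\<Sum>g\<in>min_gens S. c1 g * g) = u"
    "r2 = (\<Sum>g\<in>min_gens S. c2 g)" "(\<Sum>g\<in>min_gens S. c2 g * g) = v"
    using assms unfolding factorization_lengths_def by auto
  then have "r1 + r2 = (\<Sum>g\<in>min_gens S. c1 g + c2 g)"
    and "(\<Sum>g\<in>min_gens S. (c1 g + c2 g) * g) = u + v"
    by (simp_all add: sum.distrib distrib_right)
  then show ?thesis unfolding factorization_lengths_def by blast
qed

lemma factorization_lengths_min_gen: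
  assumes g: "g \<in> min_gens S"
  shows "1 \<in> factorization_lengths S g"
proof -
  define c where "c = (\<lambda>h::nat. if h = g then 1 else 0 :: nat)"
  have "(\<Sum>h\<in>min_gens S. c h * h) = (\<Sum>h\<in>min_gens S. if h = g then g else 0)"
    unfolding c_def by (rule sum.cong) auto
  then have "(\<Sum>h\<in>min_gens S. c h * h) = g"
    using g finite_min_gens by simp
  moreover have "(\<Sum>h\<in>min_gens S. c h) = 1"
    unfolding c_def using g finite_min_gens by simp
  ultimately show ?thesis unfolding factorization_lengths_def by force
qed

lemma factorization_lengths_nonempty: "s \<in> S \<Longrightarrow> factorization_lengths S s \<noteq> {}"
proof (induction s rule: less_induct)
  case (less s)
  consider "s = 0" | "s \<in> min_gens S"
    | x y where "x \<in> S" "y \<in> S" "x \<noteq> 0" "y \<noteq> 0" "s = x + y"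
    using less.prems unfolding min_gens_def by blast
  then show ?case
  proof cases
    case 1
    have "0 \<in> factorization_lengths S 0"
      unfolding factorization_lengths_def by (rule CollectI, rule exI[of _ "\<lambda>_. 0"]) simp
    then show ?thesis using 1 by blast
  next
    case 2
    then show ?thesis using factorization_lengths_min_gen by blast
  next
    case 3
    then have "factorization_lengths S x \<noteq> {}" "factorization_lengths S y \<noteq> {}"
      by (simp_all add: less.IH)
    then show ?thesis using factorization_lengths_add 3 by blast
  qed
qed

lemma ord_in_factorization_lengths: "s \<in> S \<Longrightarrow> ord s S \<in> factorization_lengths S s"
  unfolding ord_eq_Max_factorization_lengths
  using finite_factorization_lengths factorization_lengths_nonempty by (rule Max_in)

lemma factorization_length_le_ord: "r \<in> factorization_lengths S s \<Longrightarrow> r \<le> ord s S"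
  unfolding ord_eq_Max_factorization_lengths using finite_factorization_lengths by (rule Max_ge)

lemma mult_multiplicity_le: "s \<in> S \<Longrightarrow> m \<le> ord s S \<Longrightarrow> m * e \<le> s"
  using factorization_length_mult_le[OF ord_in_factorization_lengths, of s]
    mult_le_mono1[of m "ord s S" e]
  by linarith

lemma ord_add_min_gen: "u \<in> S \<Longrightarrow> g \<in> min_gens S \<Longrightarrow> ord u S + 1 \<le> ord (u + g) S"
  by (intro factorization_length_le_ord factorization_lengths_add ord_in_factorization_lengths
      factorization_lengths_min_gen)

lemma min_gen_minus_multiplicity_in_blowup: "g \<in> min_gens S \<Longrightarrow> g - e \<in> blowup S"
  unfolding blowup_def
  by (cases "g = e") (auto intro: monoid_gen.zero generator_in_monoid_gen)

lemma multiplicity_in_blowup: "e \<in> blowup S"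
  unfolding blowup_def by (auto intro: generator_in_monoid_gen)

lemma diff_mult_multiplicity_in_blowup:
  assumes s: "s \<in> S" and m: "m \<le> ord s S"
  shows "s - m * e \<in> blowup S"
proof -
  obtain c where r: "ord s S = (\<Sum>g\<in>min_gens S. c g)" and n: "(\<Sum>g\<in>min_gens S. c g * g) = s"
    using ord_in_factorization_lengths[OF s] unfolding factorization_lengths_def by auto
  have "(\<Sum>g\<in>min_gens S. c g * g) = (\<Sum>g\<in>min_gens S. c g * (g - e) + c g * e)"
    by (rule sum.cong) (auto simp: multiplicity_le_min_gens simp flip: distrib_left)
  also have "\<dots> = (\<Sum>g\<in>min_gens S. c g * (g - e)) + ord s S * e"
    by (simp add: sum.distrib r sum_distrib_right)
  finally have "s - m * e = (\<Sum>g\<in>min_gens S. c g * (g - e)) + (ord s S - m) * e"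
    using n m by (simp add: diff_mult_distrib)
  moreover have "(\<Sum>g\<in>min_gens S. c g * (g - e)) \<in> blowup S"
    unfolding blowup_def using finite_min_gens min_gen_minus_multiplicity_in_blowup
    by (intro monoid_gen_sum) (auto intro: monoid_gen_mult simp: blowup_def)
  moreover have "(ord s S - m) * e \<in> blowup S"
    using multiplicity_in_blowup unfolding blowup_def by (rule monoid_gen_mult)
  ultimately show ?thesis
    unfolding blowup_def by (simp add: monoid_gen_add)
qed

lemma blowup_elim:
  "x \<in> blowup S \<Longrightarrow> \<exists>s m. s \<in> S \<and> m \<le> ord s S \<and> x = s - m * e"
  unfolding blowup_def
proof (induction x rule: monoid_gen.induct)
  case zero
  show ?case using zero_in by auto
next
  case (step x a)
  then obtain s m where s: "s \<in> S" and m: "m \<le> ord s S" and x: "x = s - m * e" by blast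
  have me: "m * e \<le> s"
    using s m by (rule mult_multiplicity_le)
  from step.hyps(2) consider "a = e" | g where "g \<in> min_gens S" "a = g - e"
    by blast
  then show ?case
  proof cases
    case 1
    then have "x + a = (s + e) - m * e" using x me by simp
    moreover have "m \<le> ord (s + e) S"
      using ord_add_min_gen[OF s multiplicity_in_min_gens] m by simp
    ultimately show ?thesis using add_in[OF s multiplicity_in] by blast
  next
    case (2 g)
    then have "x + a = (s + g) - (m + 1) * e"
      using x me multiplicity_le_min_gens by auto
    moreover have "m + 1 \<le> ord (s + g) S"
      using ord_add_min_gen[OF s \<open>g \<in> min_gens S\<close>] m by simp
    ultimately show ?thesis using add_in[OF s min_gens_subset] 2 by blast
  qed
qed

lemma mem_blowup_iff: "x \<in> blowup S \<longleftrightarrow> (\<exists>s m. s \<in> S \<and> m \<le> ord s S \<and> x = s - m * e)"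
  using blowup_elim diff_mult_multiplicity_in_blowup by blast

lemma adj_subset_blowup: "adj S \<subseteq> blowup S"
  unfolding adj_def by (auto intro: diff_mult_multiplicity_in_blowup)

lemma apery_blowup_subset_adj: "apery (blowup S) e \<subseteq> adj S"
proof
  fix w assume "w \<in> apery (blowup S) e"
  then have w: "w \<in> blowup S" and not_shift: "\<not> (e \<le> w \<and> w - e \<in> blowup S)"
    unfolding apery_def by auto
  obtain s m where s: "s \<in> S" and m: "m \<le> ord s S" and ws: "w = s - m * e"
    using w unfolding mem_blowup_iff by blast
  have "m = ord s S"
  proof (rule ccontr)
    assume "m \<noteq> ord s S"
    then have less: "m + 1 \<le> ord s S" using m by simp
    then have "(m + 1) * e \<le> s"
      using s by (intro mult_multiplicity_le)
    then have "e \<le> w" and "w - e = s - (m + 1) * e" using ws by auto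
    then show False
      using not_shift diff_mult_multiplicity_in_blowup[OF s less] by simp
  qed
  then show "w \<in> adj S" unfolding adj_def using s ws by blast
qed

lemma ord_add_mult_multiplicity:
  assumes "additive S" and "u \<in> S"
  shows "ord (u + k * e) S = ord u S + k"
proof (induction k)
  case (Suc k)
  have "ord (u + k * e + e) S = ord (u + k * e) S + 1"
    using assms add_in mult_multiplicity_in unfolding additive_def by blast
  moreover have "u + Suc k * e = u + k * e + e" by simp
  ultimately show ?case using Suc by (simp only:)
qed simp

lemma additive_imp_adj_subset_apery:
  assumes "additive S"
  shows "adj S \<subseteq> apery (blowup S) e"
proof
  fix x assume "x \<in> adj S"
  then obtain s where s: "s \<in> S" and x: "x = s - ord s S * e"
    unfolding adj_def by blast
  have "\<not> (e \<le> x \<and> x - e \<in> blowup S)"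
  proof
    assume "e \<le> x \<and> x - e \<in> blowup S"
    then obtain y m where y: "y \<in> S" "m \<le> ord y S" and "e \<le> x" "x - e = y - m * e"
      unfolding mem_blowup_iff by blast
    moreover have "m * e \<le> y" "ord s S * e \<le> s"
      using y s by (simp_all add: mult_multiplicity_le)
    ultimately have "s + m * e = y + (ord s S + 1) * e"
      using x by simp
    then have "ord s S + m = ord y S + (ord s S + 1)"
      using ord_add_mult_multiplicity[OF assms] s y by metis
    then show False using y by simp
  qed
  then show "x \<in> apery (blowup S) e"
    using \<open>x \<in> adj S\<close> adj_subset_blowup unfolding apery_def by blast
qed

lemma adj_subset_apery_imp_additive:
  assumes adj_apery: "adj S \<subseteq> apery (blowup S) e"
  shows "additive S"
  unfolding additive_def
proof
  fix u assume u: "u \<in> S"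
  have ue: "u + e \<in> S" using u multiplicity_in add_in by blast
  show "ord (u + e) S = ord u S + 1"
  proof (rule ccontr)
    assume "ord (u + e) S \<noteq> ord u S + 1"
    then have less: "ord u S + 2 \<le> ord (u + e) S"
      using ord_add_min_gen[OF u multiplicity_in_min_gens] by simp
    define x where "x = u - ord u S * e"
    have "x \<in> apery (blowup S) e"
      using adj_apery u unfolding x_def adj_def by blast
    moreover have "(ord u S + 2) * e \<le> u + e"
      using ue less by (rule mult_multiplicity_le)
    then have "e \<le> x" and "x - e = (u + e) - (ord u S + 2) * e"
      unfolding x_def by auto
    ultimately show False
      using diff_mult_multiplicity_in_blowup[OF ue less] unfolding apery_def by simp
  qed
qed

end

theorem proposition4p7:
  fixes S :: "nat set"
  assumes "numerical_semigroup S"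
  shows "additive S \<longleftrightarrow> adj S = apery (blowup S) (multiplicity S)"
proof -
  interpret num_semigroup S using assms by unfold_locales
  show ?thesis
    using additive_imp_adj_subset_apery adj_subset_apery_imp_additive apery_blowup_subset_adj
    by blast
qed

end
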